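(* Under the standing assumptions below, for every $k\ge1$, with $\widetilde{X'_k}(1)=-\sum_{j=1}^{k}a_jX_{k+1-j}$, $$\mathbb{E}\big[(X_{k+1}-\widetilde{X'_k}(1))^2\big]=\sigma_\varepsilon^2+\sum_{j=k+1}^{\infty}\sum_{l=k+1}^{\infty}a_ja_l\,\sigma(l-j),$$ where the double series converges absolutely.
   Context: Standing assumptions. Let $(X_n)_{n\in\mathbb Z}$ be a real, zero-mean, weakly stationary process in $L^2$ with autocovariance function $\sigma(j)=\mathbb E[X_nX_{n+j}]$, satisfying $\sum_{j\in\mathbb Z}|\sigma(j)|=\infty$. Assume $X_n=\sum_{j\ge0}b_j\varepsilon_{n-j}$ (convergence in $L^2$). Here $(\varepsilon_n)_{n\in\mathbb Z}$ is a sequence of uncorrelated random variables with mean $0$ and variance $\sigma_\varepsilon^2>0$, and $b_0=1$, $\sum_j b_j^2<\infty$. Assume also $\varepsilon_n=\sum_{j\ge0}a_jX_{n-j}$ with $a_0=1$ and $\sum_j|a_j|<\infty$. The power series $A(z)=\sum_{j\ge0}a_jz^j$ and $B(z)=\sum_{j\ge0}b_jz^j$ satisfy $A(z)B(z)=1$ for $|z|\le1$. Fix $d\in(0,1/2)$. Assume that for every $\delta>0$ there exist constants $C_1,C_2$ (depending on $\delta$) such that $|a_j|\le C_1j^{-d-1+\delta}$ and $|b_j|\le C_2j^{d-1+\delta}$ for all $j\ge1$. *)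

theory Defs
  imports "HOL-Probability.Probability"
begin

end

theory Submission
  imports Defs
begin

(*
  Write e = eps (k+1) for the innovation at time k+1 and x_j = X (k+1-j).
  For N > k the AR partial sum splits as
     sum_{j<N} a_j x_j = [X (k+1) + sum_{j=1..k} a_j x_j] + sum_{k<j<N} a_j x_j,
  so the prediction error Y = X (k+1) - predictor satisfies
     Y + (e - sum_{j<N} a_j x_j) = e - sum_{k<j<N} a_j x_j.
  Since the innovation e is orthogonal to the past values x_j (j >= 1), the
  right-hand side has second moment s2 + sum_{k<j,l<N} a_j a_l sigma (l - j).
  Letting N tend to infinity, the left-hand side converges to E[Y^2] because
  the AR remainder tends to zero in L2, and the right-hand side converges to the
  double series, which is absolutely summable because sigma is bounded and
  (a_j) is absolutely summable.
*)

definition square_integrable :: "'a measure \<Rightarrow> ('a \<Rightarrow> real) \<Rightarrow> bool" where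
  "square_integrable M f \<longleftrightarrow> f \<in> borel_measurable M \<and> integrable M (\<lambda>w. (f w)\<^sup>2)"

lemma abs_mult_le_weighted_squares:
  fixes x y t :: real
  assumes "t > 0"
  shows "\<bar>x * y\<bar> \<le> t * x\<^sup>2 + y\<^sup>2 / t"
proof -
  have "0 \<le> (t * \<bar>x\<bar> - \<bar>y\<bar>)\<^sup>2 / t" using assms by simp
  also have "\<dots> = t * x\<^sup>2 + y\<^sup>2 / t - 2 * \<bar>x * y\<bar>"
    using assms by (simp add: power2_eq_square field_simps abs_mult)
  finally have "2 * \<bar>x * y\<bar> \<le> t * x\<^sup>2 + y\<^sup>2 / t" by simp
  moreover have "0 \<le> t * x\<^sup>2 + y\<^sup>2 / t" using assms by simp
  ultimately show ?thesis by linarith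
qed

lemma square_integrable_mult:
  assumes "square_integrable M f" "square_integrable M g"
  shows "integrable M (\<lambda>w. f w * g w)"
proof (rule Bochner_Integration.integrable_bound)
  show "integrable M (\<lambda>w. (f w)\<^sup>2 + (g w)\<^sup>2)"
    using assms by (auto simp: square_integrable_def)
  show "(\<lambda>w. f w * g w) \<in> borel_measurable M"
    using assms by (auto simp: square_integrable_def)
  show "AE w in M. norm (f w * g w) \<le> norm ((f w)\<^sup>2 + (g w)\<^sup>2)"
    using abs_mult_le_weighted_squares[of 1] by simp
qed

lemma square_integrable_add:
  assumes "square_integrable M f" "square_integrable M g"
  shows "square_integrable M (\<lambda>w. f w + g w)"
proof -
  have "(\<lambda>w. (f w + g w)\<^sup>2) = (\<lambda>w. (f w)\<^sup>2 + 2 * (f w * g w) + (g w)\<^sup>2)"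
    by (simp add: power2_eq_square algebra_simps)
  then show ?thesis
    using assms square_integrable_mult[OF assms]
    by (simp add: square_integrable_def borel_measurable_add)
qed

lemma square_integrable_cmult:
  assumes "square_integrable M f"
  shows "square_integrable M (\<lambda>w. c * f w)"
  using assms by (simp add: square_integrable_def power_mult_distrib borel_measurable_times)

lemma square_integrable_uminus:
  assumes "square_integrable M f"
  shows "square_integrable M (\<lambda>w. - f w)"
  using square_integrable_cmult[OF assms, of "-1"] by simp

lemma square_integrable_diff:
  assumes "square_integrable M f" "square_integrable M g"
  shows "square_integrable M (\<lambda>w. f w - g w)"
  using square_integrable_add[OF assms(1) square_integrable_uminus[OF assms(2)]] by simp

lemma square_integrable_sum:
  assumes "\<And>i. i \<in> I \<Longrightarrow> square_integrable M (f i)"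
  shows "square_integrable M (\<lambda>w. \<Sum>i\<in>I. f i w)"
  using assms
proof (induction I rule: infinite_finite_induct)
  case (insert i I)
  then show ?case by (simp add: square_integrable_add)
qed (simp_all add: square_integrable_def)

text \<open>A weighted form of the Cauchy--Schwarz inequality; letting t vary
  replaces the square roots of the usual form.\<close>
lemma integral_mult_weighted_bound:
  assumes "square_integrable M f" "square_integrable M g" "t > 0"
  shows "\<bar>integral\<^sup>L M (\<lambda>w. f w * g w)\<bar>
           \<le> t * integral\<^sup>L M (\<lambda>w. (f w)\<^sup>2) + integral\<^sup>L M (\<lambda>w. (g w)\<^sup>2) / t"
proof -
  have "\<bar>integral\<^sup>L M (\<lambda>w. f w * g w)\<bar> \<le> integral\<^sup>L M (\<lambda>w. \<bar>f w * g w\<bar>)"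
    by (rule integral_abs_bound)
  also have "\<dots> \<le> integral\<^sup>L M (\<lambda>w. t * (f w)\<^sup>2 + (g w)\<^sup>2 / t)"
    using assms abs_mult_le_weighted_squares
    by (intro integral_mono square_integrable_mult integrable_abs)
       (auto simp: square_integrable_def)
  also have "\<dots> = t * integral\<^sup>L M (\<lambda>w. (f w)\<^sup>2) + integral\<^sup>L M (\<lambda>w. (g w)\<^sup>2) / t"
    using assms by (simp add: square_integrable_def)
  finally show ?thesis .
qed

lemma integral_square_add:
  assumes "square_integrable M f" "square_integrable M g"
  shows "integral\<^sup>L M (\<lambda>w. (f w + g w)\<^sup>2)
           = integral\<^sup>L M (\<lambda>w. (f w)\<^sup>2) + 2 * integral\<^sup>L M (\<lambda>w. f w * g w)
             + integral\<^sup>L M (\<lambda>w. (g w)\<^sup>2)"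
proof -
  have "(\<lambda>w. (f w + g w)\<^sup>2) = (\<lambda>w. (f w)\<^sup>2 + 2 * (f w * g w) + (g w)\<^sup>2)"
    by (simp add: power2_eq_square algebra_simps)
  then show ?thesis
    using assms square_integrable_mult[OF assms] by (simp add: square_integrable_def)
qed

lemma L2_null_inner_tendsto_zero:
  assumes f: "square_integrable M f" and h: "\<And>N. square_integrable M (h N)"
    and null: "(\<lambda>N. integral\<^sup>L M (\<lambda>w. (h N w)\<^sup>2)) \<longlonglongrightarrow> 0"
  shows "(\<lambda>N. integral\<^sup>L M (\<lambda>w. f w * h N w)) \<longlonglongrightarrow> 0"
proof (rule LIMSEQ_I)
  fix r :: real assume r: "r > 0"
  define F where "F = integral\<^sup>L M (\<lambda>w. (f w)\<^sup>2)"
  define t where "t = r / (2 * (F + 1))"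
  have F: "F \<ge> 0" unfolding F_def by simp
  have t: "t > 0" "t * F < r / 2" using r F by (auto simp: t_def field_simps)
  obtain N0 where N0: "\<And>N. N \<ge> N0 \<Longrightarrow> norm (integral\<^sup>L M (\<lambda>w. (h N w)\<^sup>2)) < t * (r / 2)"
    using LIMSEQ_D[OF null, of "t * (r / 2)"] r t by auto
  have "norm (integral\<^sup>L M (\<lambda>w. f w * h N w) - 0) < r" if "N \<ge> N0" for N
  proof -
    have "\<bar>integral\<^sup>L M (\<lambda>w. f w * h N w)\<bar> \<le> t * F + integral\<^sup>L M (\<lambda>w. (h N w)\<^sup>2) / t"
      unfolding F_def by (rule integral_mult_weighted_bound[OF f h t(1)])
    moreover have "integral\<^sup>L M (\<lambda>w. (h N w)\<^sup>2) / t < r / 2"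
      using N0[OF that] t(1) by (simp add: field_simps)
    ultimately have "\<bar>integral\<^sup>L M (\<lambda>w. f w * h N w)\<bar> < r" using t(2) by linarith
    then show ?thesis by simp
  qed
  then show "\<exists>N0. \<forall>N\<ge>N0. norm (integral\<^sup>L M (\<lambda>w. f w * h N w) - 0) < r" by blast
qed

lemma L2_perturbed_square_tendsto:
  assumes f: "square_integrable M f" and h: "\<And>N. square_integrable M (h N)"
    and null: "(\<lambda>N. integral\<^sup>L M (\<lambda>w. (h N w)\<^sup>2)) \<longlonglongrightarrow> 0"
  shows "(\<lambda>N. integral\<^sup>L M (\<lambda>w. (f w + h N w)\<^sup>2)) \<longlonglongrightarrow> integral\<^sup>L M (\<lambda>w. (f w)\<^sup>2)"
proof -
  have "(\<lambda>N. integral\<^sup>L M (\<lambda>w. (f w)\<^sup>2) + 2 * integral\<^sup>L M (\<lambda>w. f w * h N w)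
             + integral\<^sup>L M (\<lambda>w. (h N w)\<^sup>2)) \<longlonglongrightarrow> integral\<^sup>L M (\<lambda>w. (f w)\<^sup>2) + 2 * 0 + 0"
    by (intro tendsto_intros L2_null_inner_tendsto_zero[OF f h null] null)
  then show ?thesis by (simp add: integral_square_add[OF f h])
qed

lemma L2_orthogonal_limit:
  assumes f: "square_integrable M f" and g: "square_integrable M g"
    and gN: "\<And>N. square_integrable M (g_approx N)"
    and conv: "(\<lambda>N. integral\<^sup>L M (\<lambda>w. (g w - g_approx N w)\<^sup>2)) \<longlonglongrightarrow> 0"
    and orth: "\<And>N. integral\<^sup>L M (\<lambda>w. f w * g_approx N w) = 0"
  shows "integral\<^sup>L M (\<lambda>w. f w * g w) = 0"
proof -
  have diff: "square_integrable M (\<lambda>w. g w - g_approx N w)" for N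
    by (rule square_integrable_diff[OF g gN])
  have split: "integral\<^sup>L M (\<lambda>w. f w * g w)
                 = integral\<^sup>L M (\<lambda>w. f w * (g w - g_approx N w))" for N
  proof -
    have "integral\<^sup>L M (\<lambda>w. f w * g w) = integral\<^sup>L M (\<lambda>w. f w * (g w - g_approx N w))
            + integral\<^sup>L M (\<lambda>w. f w * g_approx N w)"
      using square_integrable_mult[OF f diff] square_integrable_mult[OF f gN]
      by (subst Bochner_Integration.integral_add[symmetric]) (simp_all add: algebra_simps)
    then show ?thesis by (simp add: orth)
  qed
  have "(\<lambda>N. integral\<^sup>L M (\<lambda>w. f w * (g w - g_approx N w))) \<longlonglongrightarrow> 0"
    by (rule L2_null_inner_tendsto_zero[OF f diff conv])
  then show ?thesis
    by (simp add: split[symmetric] LIMSEQ_const_iff)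
qed

lemma integral_square_orthogonal_diff:
  assumes I: "finite I" and e: "square_integrable M e"
    and x: "\<And>j. j \<in> I \<Longrightarrow> square_integrable M (x j)"
    and orth: "\<And>j. j \<in> I \<Longrightarrow> integral\<^sup>L M (\<lambda>w. e w * x j w) = 0"
  shows "integral\<^sup>L M (\<lambda>w. (e w - (\<Sum>j\<in>I. c j * x j w))\<^sup>2)
           = integral\<^sup>L M (\<lambda>w. (e w)\<^sup>2)
             + (\<Sum>(j, l)\<in>I \<times> I. c j * c l * integral\<^sup>L M (\<lambda>w. x j w * x l w))"
proof -
  define T where "T w = (\<Sum>j\<in>I. c j * x j w)" for w
  have T: "square_integrable M (\<lambda>w. - T w)"
    unfolding T_def using x
    by (intro square_integrable_uminus square_integrable_sum square_integrable_cmult)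
  have prod: "integrable M (\<lambda>w. x j w * x l w)" if "j \<in> I" "l \<in> I" for j l
    using square_integrable_mult[OF x x] that .
  have cross: "integral\<^sup>L M (\<lambda>w. e w * - T w) = 0"
  proof -
    have "integral\<^sup>L M (\<lambda>w. e w * - T w) = - (\<Sum>j\<in>I. c j * integral\<^sup>L M (\<lambda>w. e w * x j w))"
      unfolding T_def using square_integrable_mult[OF e x]
      by (simp add: sum_distrib_left mult.left_commute)
    then show ?thesis by (simp add: orth)
  qed
  have var: "integral\<^sup>L M (\<lambda>w. (- T w)\<^sup>2)
               = (\<Sum>(j, l)\<in>I \<times> I. c j * c l * integral\<^sup>L M (\<lambda>w. x j w * x l w))"
  proof -
    have "(\<lambda>w. (- T w)\<^sup>2) = (\<lambda>w. \<Sum>j\<in>I. \<Sum>l\<in>I. c j * c l * (x j w * x l w))"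
      unfolding T_def by (simp add: power2_eq_square sum_product algebra_simps)
    then show ?thesis
      using prod by (simp add: sum.cartesian_product[symmetric] I)
  qed
  have "(\<lambda>w. (e w - T w)\<^sup>2) = (\<lambda>w. (e w + - T w)\<^sup>2)" by simp
  then show ?thesis
    using integral_square_add[OF e T] cross var by (simp add: T_def)
qed

text \<open>Causality of the MA representation: the innovation at time n is
  orthogonal to every X m with m < n, since X m is the L2 limit of combinations
  of earlier innovations.\<close>
lemma innovation_orthogonal_past:
  fixes X eps :: "int \<Rightarrow> 'a \<Rightarrow> real"
  assumes X: "square_integrable M (X m)" and eps: "\<And>n. square_integrable M (eps n)"
    and eps_cov: "\<And>n n'. integral\<^sup>L M (\<lambda>w. eps n w * eps n' w) = (if n = n' then s2 else 0)"
    and MA: "(\<lambda>N. integral\<^sup>L M (\<lambda>w. (X m w - (\<Sum>j<N. b j * eps (m - int j) w))\<^sup>2)) \<longlonglongrightarrow> 0"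
    and past: "m < n"
  shows "integral\<^sup>L M (\<lambda>w. eps n w * X m w) = 0"
proof (rule L2_orthogonal_limit[OF eps X _ MA])
  show "square_integrable M (\<lambda>w. \<Sum>j<N. b j * eps (m - int j) w)" for N
    using eps by (intro square_integrable_sum square_integrable_cmult)
  show "integral\<^sup>L M (\<lambda>w. eps n w * (\<Sum>j<N. b j * eps (m - int j) w)) = 0" for N
  proof -
    have "integral\<^sup>L M (\<lambda>w. eps n w * (\<Sum>j<N. b j * eps (m - int j) w))
            = (\<Sum>j<N. b j * integral\<^sup>L M (\<lambda>w. eps n w * eps (m - int j) w))"
      using square_integrable_mult[OF eps eps]
      by (simp add: sum_distrib_left mult.left_commute)
    also have "\<dots> = 0" using past by (simp add: eps_cov)
    finally show ?thesis .
  qed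
qed

lemma autocovariance_bounded:
  fixes X :: "int \<Rightarrow> 'a \<Rightarrow> real" and sigma :: "int \<Rightarrow> real"
  assumes X: "\<And>n. square_integrable M (X n)"
    and X_cov: "\<And>n j. integral\<^sup>L M (\<lambda>w. X n w * X (n + j) w) = sigma j"
  shows "\<bar>sigma j\<bar> \<le> 2 * sigma 0"
proof -
  have var: "integral\<^sup>L M (\<lambda>w. (X n w)\<^sup>2) = sigma 0" for n
    using X_cov[of n 0] by (simp add: power2_eq_square)
  have "\<bar>sigma j\<bar> = \<bar>integral\<^sup>L M (\<lambda>w. X 0 w * X j w)\<bar>" using X_cov[of 0 j] by simp
  also have "\<dots> \<le> 1 * integral\<^sup>L M (\<lambda>w. (X 0 w)\<^sup>2) + integral\<^sup>L M (\<lambda>w. (X j w)\<^sup>2) / 1"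
    by (rule integral_mult_weighted_bound[OF X X]) simp
  finally show ?thesis by (simp add: var)
qed

lemma bounded_kernel_abs_summable:
  fixes c :: "nat \<Rightarrow> real" and k :: "nat \<Rightarrow> nat \<Rightarrow> real"
  assumes c: "summable (\<lambda>j. \<bar>c j\<bar>)" and k: "\<And>j l. \<bar>k j l\<bar> \<le> K"
  shows "(\<lambda>(j, l). \<bar>c j * c l * k j l\<bar>) summable_on A \<times> A"
proof -
  have "(\<lambda>j. \<bar>c j\<bar>) summable_on A"
    using norm_summable_imp_summable_on[of "\<lambda>j. \<bar>c j\<bar>"] c
    by (auto intro: summable_on_subset_banach)
  then have row: "((\<lambda>l. K * \<bar>c j\<bar> * \<bar>c l\<bar>) has_sum K * \<bar>c j\<bar> * infsum (\<lambda>l. \<bar>c l\<bar>) A) A"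
    and col: "(\<lambda>j. K * \<bar>c j\<bar> * infsum (\<lambda>l. \<bar>c l\<bar>) A) summable_on A" for j
    by (auto intro: has_sum_cmult_right summable_on_cmult_left summable_on_cmult_right)
  have K: "K \<ge> 0" using k[of 0 0] by simp
  have "(\<lambda>(j, l). K * \<bar>c j\<bar> * \<bar>c l\<bar>) summable_on A \<times> A"
    using summable_on_SigmaI[where f = "\<lambda>(j, l). K * \<bar>c j\<bar> * \<bar>c l\<bar>", OF _ col] row K
    by auto
  then show ?thesis
  proof (rule summable_on_comparison_test)
    have "\<bar>c j * c l * k j l\<bar> \<le> K * \<bar>c j\<bar> * \<bar>c l\<bar>" for j l
    proof -
      have "\<bar>c j * c l * k j l\<bar> = (\<bar>c j\<bar> * \<bar>c l\<bar>) * \<bar>k j l\<bar>" by (simp add: abs_mult)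
      also have "\<dots> \<le> (\<bar>c j\<bar> * \<bar>c l\<bar>) * K" by (rule mult_left_mono[OF k]) simp
      finally show ?thesis by (simp add: ac_simps)
    qed
    then show "(\<lambda>(j, l). \<bar>c j * c l * k j l\<bar>) p \<le> (\<lambda>(j, l). K * \<bar>c j\<bar> * \<bar>c l\<bar>) p" for p
      by (cases p) simp
  qed auto
qed

lemma has_sum_square_partial_sums:
  fixes g :: "nat \<times> nat \<Rightarrow> 'a :: topological_comm_monoid_add"
  assumes "(g has_sum s) (A \<times> A)"
  shows "(\<lambda>N. sum g ((A \<inter> {..<N}) \<times> (A \<inter> {..<N}))) \<longlonglongrightarrow> s"
proof -
  have "filterlim (\<lambda>N. (A \<inter> {..<N}) \<times> (A \<inter> {..<N})) (finite_subsets_at_top (A \<times> A)) sequentially"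
  proof (subst filterlim_finite_subsets_at_top, intro allI impI, elim conjE)
    fix F assume F: "finite F" "F \<subseteq> A \<times> A"
    obtain N0 where "fst ` F \<union> snd ` F \<subseteq> {..<N0}"
      using finite_nat_bounded[of "fst ` F \<union> snd ` F"] F by auto
    then have "F \<subseteq> (A \<inter> {..<N}) \<times> (A \<inter> {..<N})" if "N \<ge> N0" for N
      using F that by force
    then show "\<forall>\<^sub>F N in sequentially. finite ((A \<inter> {..<N}) \<times> (A \<inter> {..<N}))
                 \<and> F \<subseteq> (A \<inter> {..<N}) \<times> (A \<inter> {..<N}) \<and> (A \<inter> {..<N}) \<times> (A \<inter> {..<N}) \<subseteq> A \<times> A"
      by (auto simp: eventually_sequentially)
  qed
  then show ?thesis
    using filterlim_compose[OF assms[unfolded has_sum_def]] by blast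
qed

lemma sum_lessThan_split_three:
  fixes f :: "nat \<Rightarrow> 'a :: comm_monoid_add"
  assumes "k + 1 \<le> N"
  shows "(\<Sum>j<N. f j) = f 0 + (\<Sum>j=1..k. f j) + (\<Sum>j\<in>{k+1..} \<inter> {..<N}. f j)"
proof -
  define R where "R = {1..k} \<union> ({k+1..} \<inter> {..<N})"
  have lessThan_N: "{..<N} = insert 0 R" using assms by (auto simp: R_def)
  have "(\<Sum>j<N. f j) = f 0 + sum f R"
    unfolding lessThan_N by (rule sum.insert) (auto simp: R_def)
  also have "sum f R = (\<Sum>j=1..k. f j) + (\<Sum>j\<in>{k+1..} \<inter> {..<N}. f j)"
    unfolding R_def by (rule sum.union_disjoint) auto
  finally show ?thesis by (simp add: add.assoc)
qed

lemma truncated_prediction_error: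
  fixes X eps :: "int \<Rightarrow> 'a \<Rightarrow> real" and sigma :: "int \<Rightarrow> real" and a b :: "nat \<Rightarrow> real"
  assumes X: "\<And>n. square_integrable M (X n)" and eps: "\<And>n. square_integrable M (eps n)"
    and X_cov: "\<And>n j. integral\<^sup>L M (\<lambda>w. X n w * X (n + j) w) = sigma j"
    and eps_cov: "\<And>n n'. integral\<^sup>L M (\<lambda>w. eps n w * eps n' w) = (if n = n' then s2 else 0)"
    and MA: "\<And>n. (\<lambda>N. integral\<^sup>L M (\<lambda>w. (X n w - (\<Sum>j<N. b j * eps (n - int j) w))\<^sup>2)) \<longlonglongrightarrow> 0"
    and a0: "a 0 = 1" and N: "k + 1 \<le> N"
  defines "I \<equiv> {k+1..} \<inter> {..<N}"
  shows "integral\<^sup>L M (\<lambda>w. ((X (int k + 1) w - (- (\<Sum>j=1..k. a j * X (int k + 1 - int j) w)))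
             + (eps (int k + 1) w - (\<Sum>j<N. a j * X (int k + 1 - int j) w)))\<^sup>2)
         = s2 + (\<Sum>(j, l)\<in>I \<times> I. a j * a l * sigma (int l - int j))"
proof -
  define x where "x j = X (int k + 1 - int j)" for j
  have pointwise: "X (int k + 1) w - (- (\<Sum>j=1..k. a j * x j w)) + (eps (int k + 1) w - (\<Sum>j<N. a j * x j w))
          = eps (int k + 1) w - (\<Sum>j\<in>I. a j * x j w)" for w
    using sum_lessThan_split_three[OF N, of "\<lambda>j. a j * x j w"] a0 by (simp add: x_def I_def)
  have "integral\<^sup>L M (\<lambda>w. ((X (int k + 1) w - (- (\<Sum>j=1..k. a j * x j w)))
               + (eps (int k + 1) w - (\<Sum>j<N. a j * x j w)))\<^sup>2)
             = integral\<^sup>L M (\<lambda>w. (eps (int k + 1) w - (\<Sum>j\<in>I. a j * x j w))\<^sup>2)"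
    by (simp only: pointwise)
  also have "\<dots> = integral\<^sup>L M (\<lambda>w. (eps (int k + 1) w)\<^sup>2)
                  + (\<Sum>(j, l)\<in>I \<times> I. a j * a l * integral\<^sup>L M (\<lambda>w. x j w * x l w))"
  proof (rule integral_square_orthogonal_diff)
    show "integral\<^sup>L M (\<lambda>w. eps (int k + 1) w * x j w) = 0" if "j \<in> I" for j
      unfolding x_def using that
      by (intro innovation_orthogonal_past[OF X eps eps_cov MA]) (simp add: I_def)
  qed (simp_all add: I_def x_def X eps)
  also have "\<dots> = s2 + (\<Sum>(j, l)\<in>I \<times> I. a j * a l * sigma (int l - int j))"
  proof -
    have "integral\<^sup>L M (\<lambda>w. x j w * x l w) = sigma (int l - int j)" for j l
    proof -
      have idx: "int k + 1 - int l + (int l - int j) = int k + 1 - int j" by simp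
      show ?thesis using X_cov[of "int k + 1 - int l" "int l - int j"]
        unfolding idx x_def by (simp add: mult.commute)
    qed
    moreover have "integral\<^sup>L M (\<lambda>w. (eps (int k + 1) w)\<^sup>2) = s2"
      using eps_cov[of "int k + 1" "int k + 1"] by (simp add: power2_eq_square)
    ultimately show ?thesis by simp
  qed
  finally show ?thesis by (simp add: x_def)
qed

theorem mainTheorem3:
  fixes M :: "'w measure"
    and X eps :: "int \<Rightarrow> 'w \<Rightarrow> real"
    and sigma :: "int \<Rightarrow> real"
    and a b :: "nat \<Rightarrow> real"
    and s2 d :: real
  assumes prob: "prob_space M"
    and X_meas: "\<And>n. X n \<in> borel_measurable M"
    and X_L2: "\<And>n. integrable M (\<lambda>\<omega>. (X n \<omega>)\<^sup>2)"
    and X_mean: "\<And>n. integral\<^sup>L M (X n) = 0"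
    and X_cov: "\<And>n j. integral\<^sup>L M (\<lambda>\<omega>. X n \<omega> * X (n + j) \<omega>) = sigma j"
    and sigma_not_abs: "\<not> ((\<lambda>j. \<bar>sigma j\<bar>) summable_on UNIV)"
    and eps_meas: "\<And>n. eps n \<in> borel_measurable M"
    and eps_L2: "\<And>n. integrable M (\<lambda>\<omega>. (eps n \<omega>)\<^sup>2)"
    and eps_mean: "\<And>n. integral\<^sup>L M (eps n) = 0"
    and eps_cov: "\<And>n m. integral\<^sup>L M (\<lambda>\<omega>. eps n \<omega> * eps m \<omega>) = (if n = m then s2 else 0)"
    and s2_pos: "s2 > 0"
    and MA: "\<And>n. (\<lambda>N. integral\<^sup>L M (\<lambda>\<omega>. (X n \<omega> - (\<Sum>j<N. b j * eps (n - int j) \<omega>))\<^sup>2))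
                 \<longlonglongrightarrow> 0"
    and b0: "b 0 = 1"
    and b_sq: "summable (\<lambda>j. (b j)\<^sup>2)"
    and AR: "\<And>n. (\<lambda>N. integral\<^sup>L M (\<lambda>\<omega>. (eps n \<omega> - (\<Sum>j<N. a j * X (n - int j) \<omega>))\<^sup>2))
                 \<longlonglongrightarrow> 0"
    and a0: "a 0 = 1"
    and a_abs: "summable (\<lambda>j. \<bar>a j\<bar>)"
    and AB: "\<And>z::complex. norm z \<le> 1 \<Longrightarrow> summable (\<lambda>j. of_real (b j) * z ^ j) \<Longrightarrow>
               (\<Sum>j. of_real (a j) * z ^ j) * (\<Sum>j. of_real (b j) * z ^ j) = 1"
    and d_pos: "0 < d" and d_lt: "d < 1/2"
    and a_decay: "\<And>\<delta>. \<delta> > 0 \<Longrightarrow> \<exists>C1. \<forall>j\<ge>1. \<bar>a j\<bar> \<le> C1 * real j powr (- d - 1 + \<delta>)"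
    and b_decay: "\<And>\<delta>. \<delta> > 0 \<Longrightarrow> \<exists>C2. \<forall>j\<ge>1. \<bar>b j\<bar> \<le> C2 * real j powr (d - 1 + \<delta>)"
    and k_ge: "k \<ge> (1::nat)"
  shows "(\<lambda>(j, l). \<bar>a j * a l * sigma (int l - int j)\<bar>) summable_on ({k+1..} \<times> {k+1..})
     \<and> integral\<^sup>L M (\<lambda>\<omega>. (X (int k + 1) \<omega> - (- (\<Sum>j=1..k. a j * X (int k + 1 - int j) \<omega>)))\<^sup>2)
         = s2 + (\<Sum>\<^sub>\<infinity>(j, l)\<in>{k+1..} \<times> {k+1..}. a j * a l * sigma (int l - int j))"
proof -
  have X: "\<And>n. square_integrable M (X n)" and eps: "\<And>n. square_integrable M (eps n)"
    using X_meas X_L2 eps_meas eps_L2 by (simp_all add: square_integrable_def)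
  define A where "A = {k+1..}"
  define g where "g = (\<lambda>(j, l). a j * a l * sigma (int l - int j))"
  define Y where "Y w = X (int k + 1) w - (- (\<Sum>j=1..k. a j * X (int k + 1 - int j) w))" for w
  define D where "D N w = eps (int k + 1) w - (\<Sum>j<N. a j * X (int k + 1 - int j) w)" for N w
  have abs_summable: "(\<lambda>(j, l). \<bar>a j * a l * sigma (int l - int j)\<bar>) summable_on A \<times> A"
    by (rule bounded_kernel_abs_summable[OF a_abs autocovariance_bounded[OF X X_cov]])
  then have "g summable_on A \<times> A"
    unfolding g_def by (subst summable_on_iff_abs_summable_on_real) (simp add: case_prod_unfold)
  then have partial_sums:
    "(\<lambda>N. s2 + sum g ((A \<inter> {..<N}) \<times> (A \<inter> {..<N}))) \<longlonglongrightarrow> s2 + infsum g (A \<times> A)"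
    by (intro tendsto_add tendsto_const has_sum_square_partial_sums has_sum_infsum)
  have errors: "(\<lambda>N. integral\<^sup>L M (\<lambda>w. (Y w + D N w)\<^sup>2)) \<longlonglongrightarrow> integral\<^sup>L M (\<lambda>w. (Y w)\<^sup>2)"
    unfolding Y_def D_def using X eps AR[of "int k + 1"]
    by (intro L2_perturbed_square_tendsto square_integrable_diff square_integrable_uminus
        square_integrable_sum square_integrable_cmult) simp_all
  \<comment> \<open>for N > k both sequences coincide, hence so do their limits\<close>
  have "\<forall>\<^sub>F N in sequentially. integral\<^sup>L M (\<lambda>w. (Y w + D N w)\<^sup>2)
          = s2 + sum g ((A \<inter> {..<N}) \<times> (A \<inter> {..<N}))"
  proof (rule eventually_sequentiallyI[of "k + 1"])
    fix N assume N: "k + 1 \<le> N"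
    show "integral\<^sup>L M (\<lambda>w. (Y w + D N w)\<^sup>2) = s2 + sum g ((A \<inter> {..<N}) \<times> (A \<inter> {..<N}))"
      unfolding Y_def D_def g_def A_def
      by (rule truncated_prediction_error[where b = b]) (fact X eps X_cov eps_cov MA a0 N)+
  qed
  then have "integral\<^sup>L M (\<lambda>w. (Y w)\<^sup>2) = s2 + infsum g (A \<times> A)"
    using LIMSEQ_unique[OF Lim_transform_eventually[OF errors] partial_sums] by blast
  with abs_summable show ?thesis by (simp add: Y_def g_def A_def)
qed

end
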